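(* In the $(3,2,2)$ scenario, the deterministic correlation $p(\vec x|\vec a)=\delta_{x_1,a_2\oplus a_3}\,\delta_{x_2,a_3\oplus a_1}\,\delta_{x_3,a_1\oplus a_2}$ cannot be realized by a process function; hence it is antinomic (not deterministically consistent), although its signalling graph is the complete directed graph on three vertices.
   Context: $(3,2,2)$ scenario: three parties with $a_k,x_k\in\{0,1\}$; $\oplus$ is addition mod 2. For finite sets $I_k,O_k$, $p(\vec i|\vec o)$ is a classical process if for all finite $A_k,X_k$ and all local interventions $p(x_k,o_k|a_k,i_k)$ the expression $\sum_{\vec i,\vec o}\prod_kp(x_k,o_k|a_k,i_k)p(\vec i|\vec o)$ is a valid conditional distribution over $\vec x$. A process function is $\omega:\vec O\to\vec I$ such that $\delta_{\vec i,\omega(\vec o)}$ is a classical process, equivalently such that for all $h=(h_k:I_k\to O_k)_k$ the map $\omega\circ h$ has a unique fixed point. A correlation is realized by $\omega$ if it equals $\sum_{\vec i,\vec o}\prod_kp(x_k,o_k|a_k,i_k)\delta_{\vec i,\omega(\vec o)}$ for some local interventions; it is deterministically consistent if it is of this form with $\delta_{\vec i,\omega(\vec o)}$ replaced by a convex combination of process functions, and antinomic otherwise. Signalling graph: edge $k\to l$ iff $f_l$ depends nontrivially on $a_k$. *)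

theory Defs
  imports Complex_Main
begin

text \<open>Settings a_k and outcomes x_k range over {0,1}, encoded as bool
  (False = 0, True = 1); addition mod 2 is then inequality (a \<noteq> b).\<close>

type_synonym bit3 = "bool \<times> bool \<times> bool"
type_synonym corr = "bit3 \<Rightarrow> bit3 \<Rightarrow> real"  \<comment> \<open>p x a = p(x|a)\<close>

definition xor2 :: "bool \<Rightarrow> bool \<Rightarrow> bool" where
  "xor2 a b = (a \<noteq> b)"

definition pr1 :: "'a \<times> 'b \<times> 'c \<Rightarrow> 'a" where "pr1 t = fst t"
definition pr2 :: "'a \<times> 'b \<times> 'c \<Rightarrow> 'b" where "pr2 t = fst (snd t)"
definition pr3 :: "'a \<times> 'b \<times> 'c \<Rightarrow> 'c" where "pr3 t = snd (snd t)"

definition comp :: "nat \<Rightarrow> 'a \<times> 'a \<times> 'a \<Rightarrow> 'a" where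
  "comp k t = (if k = 1 then pr1 t else if k = 2 then pr2 t else pr3 t)"

text \<open>A local intervention p(x_k,o_k|a_k,i_k), written P a i (x,o).\<close>
definition local_intervention :: "(bool \<Rightarrow> 'i::finite \<Rightarrow> bool \<times> 'o::finite \<Rightarrow> real) \<Rightarrow> bool" where
  "local_intervention P \<longleftrightarrow>
     (\<forall>a i xo. 0 \<le> P a i xo) \<and> (\<forall>a i. (\<Sum>xo\<in>UNIV. P a i xo) = 1)"

definition process_function ::
  "('o1 \<times> 'o2 \<times> 'o3 \<Rightarrow> 'i1 \<times> 'i2 \<times> 'i3) \<Rightarrow> bool" where
  "process_function \<omega> \<longleftrightarrow>
     (\<forall>(h1::'i1 \<Rightarrow> 'o1) (h2::'i2 \<Rightarrow> 'o2) (h3::'i3 \<Rightarrow> 'o3).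
        \<exists>!i. \<omega> (h1 (pr1 i), h2 (pr2 i), h3 (pr3 i)) = i)"

definition induced_corr ::
  "(bool \<Rightarrow> 'i1::finite \<Rightarrow> bool \<times> 'o1::finite \<Rightarrow> real) \<Rightarrow>
   (bool \<Rightarrow> 'i2::finite \<Rightarrow> bool \<times> 'o2::finite \<Rightarrow> real) \<Rightarrow>
   (bool \<Rightarrow> 'i3::finite \<Rightarrow> bool \<times> 'o3::finite \<Rightarrow> real) \<Rightarrow>
   ('i1 \<times> 'i2 \<times> 'i3 \<Rightarrow> 'o1 \<times> 'o2 \<times> 'o3 \<Rightarrow> real) \<Rightarrow> corr" where
  "induced_corr P1 P2 P3 W x a =
     (\<Sum>i\<in>UNIV. \<Sum>oo\<in>UNIV.
        P1 (pr1 a) (pr1 i) (pr1 x, pr1 oo) * P2 (pr2 a) (pr2 i) (pr2 x, pr2 oo) *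
        P3 (pr3 a) (pr3 i) (pr3 x, pr3 oo) * W i oo)"

definition realized_by ::
  "('o1::finite \<times> 'o2::finite \<times> 'o3::finite \<Rightarrow> 'i1::finite \<times> 'i2::finite \<times> 'i3::finite) \<Rightarrow> corr \<Rightarrow> bool" where
  "realized_by \<omega> p \<longleftrightarrow>
     (\<exists>(P1 :: bool \<Rightarrow> 'i1 \<Rightarrow> bool \<times> 'o1 \<Rightarrow> real) (P2 :: bool \<Rightarrow> 'i2 \<Rightarrow> bool \<times> 'o2 \<Rightarrow> real)
        (P3 :: bool \<Rightarrow> 'i3 \<Rightarrow> bool \<times> 'o3 \<Rightarrow> real).
        local_intervention P1 \<and> local_intervention P2 \<and> local_intervention P3 \<and>
        p = induced_corr P1 P2 P3 (\<lambda>i oo. if i = \<omega> oo then 1 else 0))"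

text \<open>p is deterministically consistent with input/output sets given by the type
  parameter: realized by a convex combination of process functions (a weight function
  on the finite set of all maps O \<Rightarrow> I, supported on process functions).\<close>
definition det_consistent ::
  "('o1::finite \<times> 'o2::finite \<times> 'o3::finite \<Rightarrow> 'i1::finite \<times> 'i2::finite \<times> 'i3::finite) itself \<Rightarrow> corr \<Rightarrow> bool" where
  "det_consistent _ p \<longleftrightarrow>
     (\<exists>(lam :: ('o1 \<times> 'o2 \<times> 'o3 \<Rightarrow> 'i1 \<times> 'i2 \<times> 'i3) \<Rightarrow> real)
        (P1 :: bool \<Rightarrow> 'i1 \<Rightarrow> bool \<times> 'o1 \<Rightarrow> real) (P2 :: bool \<Rightarrow> 'i2 \<Rightarrow> bool \<times> 'o2 \<Rightarrow> real)
        (P3 :: bool \<Rightarrow> 'i3 \<Rightarrow> bool \<times> 'o3 \<Rightarrow> real).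
        (\<forall>w. 0 \<le> lam w) \<and> (\<forall>w. lam w \<noteq> 0 \<longrightarrow> process_function w) \<and>
        (\<Sum>w\<in>UNIV. lam w) = 1 \<and>
        local_intervention P1 \<and> local_intervention P2 \<and> local_intervention P3 \<and>
        p = induced_corr P1 P2 P3 (\<lambda>i oo. \<Sum>w\<in>UNIV. lam w * (if i = w oo then 1 else 0)))"

definition det_corr :: "(bit3 \<Rightarrow> bit3) \<Rightarrow> corr" where
  "det_corr f x a = (if x = f a then 1 else 0)"

definition sig_edge :: "(bit3 \<Rightarrow> bit3) \<Rightarrow> nat \<Rightarrow> nat \<Rightarrow> bool" where
  "sig_edge f k l \<longleftrightarrow>
     (\<exists>a a'. (\<forall>j\<in>{1,2,3}. j \<noteq> k \<longrightarrow> comp j a = comp j a') \<and> comp l (f a) \<noteq> comp l (f a'))"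

definition f_xor :: "bit3 \<Rightarrow> bit3" where
  "f_xor a = (xor2 (pr2 a) (pr3 a), xor2 (pr3 a) (pr1 a), xor2 (pr1 a) (pr2 a))"

end

theory Submission
  imports Defs
begin

text \<open>Setting a_3 = 0 turns the correlation into the swap x_1 = a_2, x_2 = a_1 between
  parties 1 and 2, which requires signalling in both directions. Fixing the intervention
  of party 3 reduces a process function to a bipartite map whose composition with any
  local maps has a fixed point. For such a map the input of each party cannot depend on
  its own output, and the inputs cannot both be non-constant: otherwise two local maps
  that flip outputs whenever the input takes a distinguished value produce a causal loop
  without fixed point. A point in the support of each stochastic intervention reduces
  realisations by (convex combinations of) process functions to this deterministic
  situation.\<close>

lemma bipartite_fixed_points_no_self_signalling:
  fixes \<omega> :: "'o1 \<times> 'o2 \<Rightarrow> 'i1 \<times> 'i2"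
  assumes fixed_points: "\<And>h1 h2. \<exists>i. \<omega> (h1 (fst i), h2 (snd i)) = i"
  shows "fst (\<omega> (o1, o2)) = fst (\<omega> (o1', o2))"
    and "snd (\<omega> (o1, o2)) = snd (\<omega> (o1, o2'))"
proof -
  show "fst (\<omega> (o1, o2)) = fst (\<omega> (o1', o2))"
  proof (rule ccontr)
    assume ne: "fst (\<omega> (o1, o2)) \<noteq> fst (\<omega> (o1', o2))"
    define h1 where "h1 j = (if j = fst (\<omega> (o1, o2)) then o1' else o1)" for j
    obtain i where i: "\<omega> (h1 (fst i), o2) = i"
      using fixed_points[of h1 "\<lambda>_. o2"] by auto
    show False
      using i ne by (cases "fst i = fst (\<omega> (o1, o2))") (auto simp: h1_def)
  qed
  show "snd (\<omega> (o1, o2)) = snd (\<omega> (o1, o2'))"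
  proof (rule ccontr)
    assume ne: "snd (\<omega> (o1, o2)) \<noteq> snd (\<omega> (o1, o2'))"
    define h2 where "h2 j = (if j = snd (\<omega> (o1, o2)) then o2' else o2)" for j
    obtain i where i: "\<omega> (o1, h2 (snd i)) = i"
      using fixed_points[of "\<lambda>_. o1" h2] by auto
    show False
      using i ne by (cases "snd i = snd (\<omega> (o1, o2))") (auto simp: h2_def)
  qed
qed

lemma bipartite_fixed_points_one_way:
  fixes \<omega> :: "'o1 \<times> 'o2 \<Rightarrow> 'i1 \<times> 'i2"
  assumes fixed_points: "\<And>h1 h2. \<exists>i. \<omega> (h1 (fst i), h2 (snd i)) = i"
  shows "(\<forall>u v. fst (\<omega> u) = fst (\<omega> v)) \<or> (\<forall>u v. snd (\<omega> u) = snd (\<omega> v))"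
proof (rule ccontr)
  note self = bipartite_fixed_points_no_self_signalling[of \<omega>, OF fixed_points]
  assume "\<not> ?thesis"
  then obtain p q r s where "fst (\<omega> p) \<noteq> fst (\<omega> q)" "snd (\<omega> r) \<noteq> snd (\<omega> s)"
    by blast
  then obtain o1 o1' o2 o2' where
    ne1: "\<And>x. fst (\<omega> (x, o2)) \<noteq> fst (\<omega> (x, o2'))" and
    ne2: "\<And>y. snd (\<omega> (o1, y)) \<noteq> snd (\<omega> (o1', y))"
    by (metis self prod.collapse)
  define h1 where "h1 j = (if j = fst (\<omega> (o1, o2)) then o1' else o1)" for j
  define h2 where "h2 j = (if j = snd (\<omega> (o1, o2)) then o2 else o2')" for j
  obtain i where i: "\<omega> (h1 (fst i), h2 (snd i)) = i"
    using fixed_points by blast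
  show False
  proof (cases "fst i = fst (\<omega> (o1, o2))")
    case True
    then have h1i: "h1 (fst i) = o1'"
      by (simp add: h1_def)
    then have "snd i = snd (\<omega> (o1', o2))"
      using i self(2) by (metis snd_conv)
    then have "h2 (snd i) = o2'"
      using ne2[of o2] by (simp add: h2_def)
    then have "fst i = fst (\<omega> (o1, o2'))"
      using i h1i self(1) by (metis fst_conv)
    then show False
      using True ne1[of o1] by simp
  next
    case False
    then have h1i: "h1 (fst i) = o1"
      by (simp add: h1_def)
    then have "snd i = snd (\<omega> (o1, o2))"
      using i self(2) by (metis snd_conv)
    then have "h2 (snd i) = o2"
      by (simp add: h2_def)
    then have "fst i = fst (\<omega> (o1, o2))"
      using i h1i by (metis fst_conv)
    then show False
      using False by simp
  qed
qed

text \<open>The deterministic swap x_1 = a_2, x_2 = a_1; g_k a j = (x_k, o_k) is the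
  deterministic intervention of party k on setting a and input j.\<close>

lemma bipartite_fixed_points_no_swap:
  fixes \<omega> :: "'o1 \<times> 'o2 \<Rightarrow> 'i1 \<times> 'i2"
    and g1 :: "bool \<Rightarrow> 'i1 \<Rightarrow> bool \<times> 'o1" and g2 :: "bool \<Rightarrow> 'i2 \<Rightarrow> bool \<times> 'o2"
  assumes fixed_points: "\<And>h1 h2. \<exists>i. \<omega> (h1 (fst i), h2 (snd i)) = i"
    and swap: "\<And>a1 a2. \<exists>j. \<omega> (snd (g1 a1 (fst j)), snd (g2 a2 (snd j))) = j
                              \<and> fst (g1 a1 (fst j)) = a2 \<and> fst (g2 a2 (snd j)) = a1"
  shows False
  using bipartite_fixed_points_one_way[of \<omega>, OF fixed_points]
proof
  assume const: "\<forall>u v. fst (\<omega> u) = fst (\<omega> v)"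
  obtain j where "\<omega> (snd (g1 False (fst j)), snd (g2 False (snd j))) = j"
    "fst (g1 False (fst j)) = False"
    using swap by blast
  moreover obtain j' where "\<omega> (snd (g1 False (fst j')), snd (g2 True (snd j'))) = j'"
    "fst (g1 False (fst j')) = True"
    using swap by blast
  ultimately show False
    using const by metis
next
  assume const: "\<forall>u v. snd (\<omega> u) = snd (\<omega> v)"
  obtain j where "\<omega> (snd (g1 False (fst j)), snd (g2 False (snd j))) = j"
    "fst (g2 False (snd j)) = False"
    using swap by blast
  moreover obtain j' where "\<omega> (snd (g1 True (fst j')), snd (g2 False (snd j'))) = j'"
    "fst (g2 False (snd j')) = True"
    using swap by blast
  ultimately show False
    using const by metis
qed

lemma process_function_fix_third_party:
  fixes \<omega> :: "'o1 \<times> 'o2 \<times> 'o3 \<Rightarrow> 'i1 \<times> 'i2 \<times> 'i3" and h :: "'i3 \<Rightarrow> 'o3"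
  assumes pf: "process_function \<omega>"
  obtains \<omega>2 :: "'o1 \<times> 'o2 \<Rightarrow> 'i1 \<times> 'i2"
  where "\<And>h1 h2. \<exists>j. \<omega>2 (h1 (fst j), h2 (snd j)) = j"
    and "\<And>h1 h2 i. \<omega> (h1 (pr1 i), h2 (pr2 i), h (pr3 i)) = i
                    \<Longrightarrow> \<omega>2 (h1 (pr1 i), h2 (pr2 i)) = (pr1 i, pr2 i)"
proof -
  have unique: "\<exists>!i. \<omega> (h1 (pr1 i), h2 (pr2 i), h (pr3 i)) = i" for h1 h2
    using pf unfolding process_function_def by blast
  define fp where "fp o1 o2 = (THE i. \<omega> (o1, o2, h (pr3 i)) = i)" for o1 o2
  define \<omega>2 where "\<omega>2 o12 = (pr1 (fp (fst o12) (snd o12)), pr2 (fp (fst o12) (snd o12)))"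
    for o12
  have link: "\<omega>2 (h1 (pr1 i), h2 (pr2 i)) = (pr1 i, pr2 i)"
    if i: "\<omega> (h1 (pr1 i), h2 (pr2 i), h (pr3 i)) = i" for h1 h2 i
  proof -
    \<comment> \<open>i is also the unique fixed point when parties 1 and 2 output constants\<close>
    have "fp (h1 (pr1 i)) (h2 (pr2 i)) = i"
      unfolding fp_def
      using unique[of "\<lambda>_. h1 (pr1 i)" "\<lambda>_. h2 (pr2 i)"] i by (auto intro: the1_equality)
    then show ?thesis
      by (simp add: \<omega>2_def)
  qed
  have "\<exists>j. \<omega>2 (h1 (fst j), h2 (snd j)) = j" for h1 h2
  proof -
    obtain i where "\<omega> (h1 (pr1 i), h2 (pr2 i), h (pr3 i)) = i"
      using unique by blast
    then show ?thesis
      using link by (metis fst_conv snd_conv)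
  qed
  with link show thesis
    using that by blast
qed

definition support_point :: "('a \<Rightarrow> real) \<Rightarrow> 'a" where
  "support_point p = (SOME x. 0 < p x)"

lemma support_point_pos:
  assumes "\<And>x. 0 \<le> p x" and "sum p UNIV = 1"
  shows "0 < p (support_point p)"
proof -
  have "\<exists>x. p x \<noteq> 0"
    using assms(2) by (metis sum.neutral zero_neq_one)
  then have "\<exists>x. 0 < p x"
    using assms(1) by (metis less_le)
  then show ?thesis
    unfolding support_point_def by (rule someI_ex)
qed

lemma local_intervention_support_point_pos:
  "local_intervention P \<Longrightarrow> 0 < P a j (support_point (P a j))"
  unfolding local_intervention_def by (intro support_point_pos) auto

lemma induced_det_corr_pos_summand:
  fixes P1 :: "bool \<Rightarrow> 'i1::finite \<Rightarrow> bool \<times> 'o1::finite \<Rightarrow> real"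
    and P2 :: "bool \<Rightarrow> 'i2::finite \<Rightarrow> bool \<times> 'o2::finite \<Rightarrow> real"
    and P3 :: "bool \<Rightarrow> 'i3::finite \<Rightarrow> bool \<times> 'o3::finite \<Rightarrow> real"
  assumes L: "local_intervention P1" "local_intervention P2" "local_intervention P3"
    and W_nonneg: "\<And>i oo. 0 \<le> W i oo"
    and eq: "induced_corr P1 P2 P3 W = det_corr f"
    and pos: "0 < P1 (pr1 a) (pr1 i) (pr1 x, pr1 oo) * P2 (pr2 a) (pr2 i) (pr2 x, pr2 oo) *
                  P3 (pr3 a) (pr3 i) (pr3 x, pr3 oo) * W i oo"
  shows "x = f a"
proof -
  define F where "F i' oo' = P1 (pr1 a) (pr1 i') (pr1 x, pr1 oo') *
    P2 (pr2 a) (pr2 i') (pr2 x, pr2 oo') * P3 (pr3 a) (pr3 i') (pr3 x, pr3 oo') * W i' oo'"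
    for i' oo'
  have F_nonneg: "0 \<le> F i' oo'" for i' oo'
    using L W_nonneg unfolding F_def local_intervention_def by simp
  have "0 < F i oo"
    using pos by (simp add: F_def)
  also have "\<dots> \<le> (\<Sum>oo'\<in>UNIV. F i oo')"
    by (rule member_le_sum) (auto simp: F_nonneg)
  also have "\<dots> \<le> (\<Sum>i'\<in>UNIV. \<Sum>oo'\<in>UNIV. F i' oo')"
    by (rule member_le_sum[where f="\<lambda>i'. \<Sum>oo'\<in>UNIV. F i' oo'"])
       (auto intro: sum_nonneg F_nonneg)
  also have "\<dots> = induced_corr P1 P2 P3 W x a"
    unfolding induced_corr_def F_def by simp
  also have "\<dots> = det_corr f x a"
    using eq by simp
  finally show ?thesis
    unfolding det_corr_def by (simp split: if_splits)
qed

lemma f_xor_not_induced_by_process_function: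
  fixes \<omega> :: "'o1::finite \<times> 'o2::finite \<times> 'o3::finite \<Rightarrow> 'i1::finite \<times> 'i2::finite \<times> 'i3::finite"
    and P1 :: "bool \<Rightarrow> 'i1 \<Rightarrow> bool \<times> 'o1 \<Rightarrow> real"
    and P2 :: "bool \<Rightarrow> 'i2 \<Rightarrow> bool \<times> 'o2 \<Rightarrow> real"
    and P3 :: "bool \<Rightarrow> 'i3 \<Rightarrow> bool \<times> 'o3 \<Rightarrow> real"
  assumes L: "local_intervention P1" "local_intervention P2" "local_intervention P3"
    and pf: "process_function \<omega>"
    and W_nonneg: "\<And>i oo. 0 \<le> W i oo"
    and W_pos: "\<And>oo. 0 < W (\<omega> oo) oo"
  shows "induced_corr P1 P2 P3 W \<noteq> det_corr f_xor"
proof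
  assume eq: "induced_corr P1 P2 P3 W = det_corr f_xor"
  define g1 where "g1 a j = support_point (P1 a j)" for a j
  define g2 where "g2 a j = support_point (P2 a j)" for a j
  define g3 where "g3 a j = support_point (P3 a j)" for a j
  obtain \<omega>2 :: "'o1 \<times> 'o2 \<Rightarrow> 'i1 \<times> 'i2" where
    fixed_points2: "\<And>h1 h2. \<exists>j. \<omega>2 (h1 (fst j), h2 (snd j)) = j" and
    link: "\<And>h1 h2 i. \<omega> (h1 (pr1 i), h2 (pr2 i), snd (g3 False (pr3 i))) = i
                     \<Longrightarrow> \<omega>2 (h1 (pr1 i), h2 (pr2 i)) = (pr1 i, pr2 i)"
    using process_function_fix_third_party[where h = "\<lambda>j. snd (g3 False j)", OF pf] by blast
  have "\<exists>j. \<omega>2 (snd (g1 a1 (fst j)), snd (g2 a2 (snd j))) = j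
            \<and> fst (g1 a1 (fst j)) = a2 \<and> fst (g2 a2 (snd j)) = a1" for a1 a2
  proof -
    let ?h1 = "\<lambda>j. snd (g1 a1 j)" and ?h2 = "\<lambda>j. snd (g2 a2 j)"
    obtain i where i: "\<omega> (?h1 (pr1 i), ?h2 (pr2 i), snd (g3 False (pr3 i))) = i"
      using pf[unfolded process_function_def, rule_format, of ?h1 ?h2 "\<lambda>j. snd (g3 False j)"]
      by auto
    define oo where "oo = (?h1 (pr1 i), ?h2 (pr2 i), snd (g3 False (pr3 i)))"
    define x where "x = (fst (g1 a1 (pr1 i)), fst (g2 a2 (pr2 i)), fst (g3 False (pr3 i)))"
    have "0 < W i oo"
      using W_pos[of oo] i by (simp add: oo_def)
    moreover have "0 < P1 a1 (pr1 i) (g1 a1 (pr1 i))" "0 < P2 a2 (pr2 i) (g2 a2 (pr2 i))"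
      "0 < P3 False (pr3 i) (g3 False (pr3 i))"
      unfolding g1_def g2_def g3_def by (simp_all add: local_intervention_support_point_pos L)
    ultimately have "0 < P1 a1 (pr1 i) (g1 a1 (pr1 i)) * P2 a2 (pr2 i) (g2 a2 (pr2 i)) *
                         P3 False (pr3 i) (g3 False (pr3 i)) * W i oo"
      by simp
    then have "x = f_xor (a1, a2, False)"
      by (intro induced_det_corr_pos_summand[OF L W_nonneg eq, where i = i and oo = oo])
         (simp add: x_def oo_def pr1_def pr2_def pr3_def)
    then have "fst (g1 a1 (pr1 i)) = a2" "fst (g2 a2 (pr2 i)) = a1"
      by (auto simp: x_def f_xor_def xor2_def pr1_def pr2_def pr3_def)
    moreover have "\<omega>2 (?h1 (pr1 i), ?h2 (pr2 i)) = (pr1 i, pr2 i)"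
      using i by (rule link)
    ultimately show ?thesis
      by (intro exI[of _ "(pr1 i, pr2 i)"]) simp
  qed
  then show False
    by (rule bipartite_fixed_points_no_swap[of \<omega>2, OF fixed_points2])
qed

lemma f_xor_not_realized_by_process_function:
  fixes \<omega> :: "'o1::finite \<times> 'o2::finite \<times> 'o3::finite \<Rightarrow> 'i1::finite \<times> 'i2::finite \<times> 'i3::finite"
  assumes "process_function \<omega>"
  shows "\<not> realized_by \<omega> (det_corr f_xor)"
proof
  assume "realized_by \<omega> (det_corr f_xor)"
  then obtain P1 :: "bool \<Rightarrow> 'i1 \<Rightarrow> bool \<times> 'o1 \<Rightarrow> real"
    and P2 :: "bool \<Rightarrow> 'i2 \<Rightarrow> bool \<times> 'o2 \<Rightarrow> real"
    and P3 :: "bool \<Rightarrow> 'i3 \<Rightarrow> bool \<times> 'o3 \<Rightarrow> real" where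
    L: "local_intervention P1" "local_intervention P2" "local_intervention P3"
    and eq: "det_corr f_xor = induced_corr P1 P2 P3 (\<lambda>i oo. if i = \<omega> oo then 1 else 0)"
    unfolding realized_by_def by blast
  show False
    using f_xor_not_induced_by_process_function[OF L assms,
        where W = "\<lambda>i oo. if i = \<omega> oo then 1 else 0"] eq
    by (simp add: if_split)
qed

lemma f_xor_not_det_consistent:
  "\<not> det_consistent TYPE('o1::finite \<times> 'o2::finite \<times> 'o3::finite \<Rightarrow> 'i1::finite \<times> 'i2::finite \<times> 'i3::finite)
     (det_corr f_xor)"
proof
  assume "det_consistent TYPE('o1 \<times> 'o2 \<times> 'o3 \<Rightarrow> 'i1 \<times> 'i2 \<times> 'i3) (det_corr f_xor)"
  then obtain lam :: "('o1 \<times> 'o2 \<times> 'o3 \<Rightarrow> 'i1 \<times> 'i2 \<times> 'i3) \<Rightarrow> real"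
    and P1 :: "bool \<Rightarrow> 'i1 \<Rightarrow> bool \<times> 'o1 \<Rightarrow> real" and P2 :: "bool \<Rightarrow> 'i2 \<Rightarrow> bool \<times> 'o2 \<Rightarrow> real"
    and P3 :: "bool \<Rightarrow> 'i3 \<Rightarrow> bool \<times> 'o3 \<Rightarrow> real" where
    lam_nonneg: "\<forall>w. 0 \<le> lam w" and lam_pf: "\<forall>w. lam w \<noteq> 0 \<longrightarrow> process_function w"
    and lam_sum: "(\<Sum>w\<in>UNIV. lam w) = 1"
    and L: "local_intervention P1" "local_intervention P2" "local_intervention P3"
    and eq: "det_corr f_xor = induced_corr P1 P2 P3 (\<lambda>i oo. \<Sum>w\<in>UNIV. lam w * (if i = w oo then 1 else 0))"
    unfolding det_consistent_def by (elim exE conjE) (rule that)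
  define \<omega> where "\<omega> = support_point lam"
  have lam_pos: "0 < lam \<omega>"
    unfolding \<omega>_def using lam_nonneg lam_sum by (simp add: support_point_pos)
  let ?W = "\<lambda>i oo. \<Sum>w\<in>UNIV. lam w * (if i = w oo then 1 else 0)"
  have W_pos: "0 < ?W (\<omega> oo) oo" for oo
  proof -
    have "lam \<omega> * (if \<omega> oo = \<omega> oo then 1 else 0) \<le> ?W (\<omega> oo) oo"
      by (rule member_le_sum[where f="\<lambda>w. lam w * (if \<omega> oo = w oo then 1 else 0)"])
         (auto simp: lam_nonneg)
    then show ?thesis
      using lam_pos by simp
  qed
  have W_nonneg: "0 \<le> ?W i oo" for i oo
    using lam_nonneg by (intro sum_nonneg) simp
  have pf: "process_function \<omega>"
    using lam_pf lam_pos by simp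
  show False
    using f_xor_not_induced_by_process_function[where W = ?W, OF L pf W_nonneg W_pos] eq by simp
qed

lemma sig_edge_f_xor_iff: "\<forall>k\<in>{1,2,3}. \<forall>l\<in>{1,2,3}. sig_edge f_xor k l \<longleftrightarrow> k \<noteq> l"
  by (simp add: sig_edge_def f_xor_def comp_def pr1_def pr2_def pr3_def xor2_def
      split_paired_Ex ex_bool_eq)

theorem mainTheorem8:
  shows "(\<forall>\<omega> :: ('o1::finite \<times> 'o2::finite \<times> 'o3::finite \<Rightarrow> 'i1::finite \<times> 'i2::finite \<times> 'i3::finite).
            process_function \<omega> \<longrightarrow> \<not> realized_by \<omega> (det_corr f_xor))
       \<and> \<not> det_consistent TYPE('o1 \<times> 'o2 \<times> 'o3 \<Rightarrow> 'i1 \<times> 'i2 \<times> 'i3) (det_corr f_xor)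
       \<and> (\<forall>k\<in>{1,2,3}. \<forall>l\<in>{1,2,3}. sig_edge f_xor k l \<longleftrightarrow> k \<noteq> l)"
  using f_xor_not_realized_by_process_function f_xor_not_det_consistent sig_edge_f_xor_iff
  by blast

end
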